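(* Let $\mathcal{A}$ be a complete topological ring and let $\varphi\colon\mathcal{A}\rightarrow\mathcal{B}$ be a complete topological $\mathcal{A}$-algebra. Let $\mathfrak{S}=\mathrm{Spf}(\mathcal{A})$ and let $f\colon\mathfrak{X}=\mathrm{Spf}(\mathcal{B})\rightarrow\mathfrak{S}$ be the corresponding affine ind-scheme and affine ind-$\mathfrak{S}$-scheme. Then actions $\mathbb{G}_{a,\mathfrak{S}}\widehat{\times}_{\mathfrak{S}}\mathfrak{X}\rightarrow\mathfrak{X}$ of the additive group ind-scheme $\mathbb{G}_{a,\mathfrak{S}}$ on $\mathfrak{X}$ are in one-to-one correspondence with topologically integrable iterated higher $\mathcal{A}$-derivations $D=\{D^{(i)}\}_{i\geq 0}$ of $\mathcal{B}$.
   Context: Conventions: all topological abelian groups, rings and modules are linearly topologized and admit a countable fundamental system of neighbourhoods of $0$ consisting of open subgroups (resp. open ideals, open submodules); homomorphisms of topological rings/modules are continuous homomorphisms. The separated completion of a topological ring $\mathcal{A}$ is $\widehat{\mathcal{A}}=\varprojlim_{\mathfrak{a}}\mathcal{A}/\mathfrak{a}$ ($\mathfrak{a}$ running over open ideals, each quotient discrete) with the inverse limit topology; $\mathcal{A}$ is complete if the canonical map $\mathcal{A}\to\widehat{\mathcal{A}}$ is an isomorphism of topological rings. A complete topological $\mathcal{A}$-algebra is a complete topological ring $\mathcal{B}$ with a continuous ring homomorphism $\mathcal{A}\to\mathcal{B}$. Restricted power series: for a complete topological ring $\mathcal{B}$, $\mathcal{B}\{T_1,\dots,T_r\}$ is the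 subring of $\mathcal{B}[[T_1,\dots,T_r]]$ of series $\sum_I b_IT^I$ whose coefficients converge to $0$ (for every open ideal $\mathfrak{b}$, all but finitely many $b_I$ lie in $\mathfrak{b}$), with the topology whose fundamental system of open ideals consists of the series with all coefficients in $\mathfrak{b}$, $\mathfrak{b}$ open in $\mathcal{B}$; equivalently $\mathcal{B}\{T_1,\dots,T_r\}=\varprojlim_{\mathfrak{b}}(\mathcal{B}/\mathfrak{b})[T_1,\dots,T_r]$. Affine ind-schemes: for a complete topological ring $\mathcal{A}$, $\mathrm{Spf}(\mathcal{A})$ is the set of open prime ideals of $\mathcal{A}$ with the topology induced by the Zariski topology of $\mathrm{Spec}(\mathcal{A})$, equipped with the sheaf of topological rings $\mathcal{O}_{\mathrm{Spf}(\mathcal{A})}=\varprojlim_n (j_n)_*\mathcal{O}_{\mathrm{Spec}(\mathcal{A}/\mathfrak{a}_n)}$ (restricted to $\mathrm{Spf}(\mathcal{A})$), where $(\mathfrak{a}_n)$ is a fundamental system of open ideals and $j_n\colon\mathrm{Spec}(\mathcal{A}/\mathfrak{a}_n)\to\mathrm{Spec}(\mathcal{A})$ the closed immersions; it is a locally topologically ringed space with global sections $\mathcal{A}$. Affine ind-schemes are locally topologically ringed spaces isomorphic to some $\mathrm{Spf}(\mathcal{A})$, and morphisms between them are the morphisms $\mathrm{Spf}(\varphi)$ induced by continuous ring homomorphisms $\varphi$; for $\mathfrak{S}=\mathrm{Spf}(\mathcal{A})$, the category of affine ind-$\mathfrak{S}$-schemes is thereby anti-equivalent to the category of complete topological $\mathcal{A}$-algebras,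 and the fibre product $\mathrm{Spf}(\mathcal{B})\widehat{\times}_{\mathfrak{S}}\mathrm{Spf}(\mathcal{B}')$ is $\mathrm{Spf}(\mathcal{B}\widehat{\otimes}_{\mathcal{A}}\mathcal{B}')$, where $\widehat{\otimes}$ is the completed tensor product (separated completion of $\mathcal{B}\otimes_{\mathcal{A}}\mathcal{B}'$ for the topology generated by $U\otimes\mathcal{B}'+\mathcal{B}\otimes V$, $U,V$ open ideals). The additive group ind-scheme $\mathbb{G}_{a,\mathfrak{S}}$ is $\mathrm{Spf}(\mathcal{A}\{T\})$ with group law $\mathrm{Spf}(m)$, $m\colon\mathcal{A}\{T\}\to\mathcal{A}\{T,T'\}$, $T\mapsto T+T'$, and neutral section $\mathrm{Spf}(\epsilon)$, $\epsilon\colon\mathcal{A}\{T\}\to\mathcal{A}$, $T\mapsto 0$; one has $\mathbb{G}_{a,\mathfrak{S}}\widehat{\times}_{\mathfrak{S}}\mathrm{Spf}(\mathcal{B})\cong\mathrm{Spf}(\mathcal{B}\{T\})$. An action is a morphism of affine ind-$\mathfrak{S}$-schemes $\mu\colon\mathbb{G}_{a,\mathfrak{S}}\widehat{\times}_{\mathfrak{S}}\mathfrak{X}\to\mathfrak{X}$ satisfying $\mu\circ(\mathrm{id}\times\mu)=\mu\circ(m\times\mathrm{id})$ and $\mu\circ(\mathrm{Spf}(\epsilon)\times\mathrm{id})=$ the canonical isomorphism $\mathfrak{S}\widehat{\times}_{\mathfrak{S}}\mathfrak{X}\cong\mathfrak{X}$. Iterated higher derivations: a continuous iterated higher $\mathcal{A}$-derivation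 of $\mathcal{B}$ is a family $D=\{D^{(i)}\}_{i\ge0}$ of continuous $\mathcal{A}$-module homomorphisms $D^{(i)}\colon\mathcal{B}\to\mathcal{B}$ with $D^{(0)}=\mathrm{id}_{\mathcal{B}}$, $D^{(i)}(bb')=\sum_{j=0}^iD^{(j)}(b)D^{(i-j)}(b')$, and $D^{(i)}\circ D^{(j)}=\binom{i+j}{i}D^{(i+j)}$. It is topologically integrable if the sequence $(D^{(i)})_{i}$ converges continuously to $0$: for every $b\in\mathcal{B}$ and every open ideal $\mathfrak{b}'$ of $\mathcal{B}$ there exist an open ideal $\mathfrak{b}$ and $n_0$ with $D^{(n)}(b+\mathfrak{b})\subseteq\mathfrak{b}'$ for all $n\ge n_0$. *)

theory Defs
  imports Main
begin

text \<open>Linearly topologized commutative rings with a countable fundamental system of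
  open ideals, represented by a sequence N of ideals (filter base).\<close>

definition is_ideal :: "'a::comm_ring_1 set \<Rightarrow> bool" where
  "is_ideal J \<longleftrightarrow> 0 \<in> J \<and> (\<forall>x\<in>J. \<forall>y\<in>J. x + y \<in> J) \<and> (\<forall>r. \<forall>x\<in>J. r * x \<in> J)"

definition fund_system :: "(nat \<Rightarrow> 'a::comm_ring_1 set) \<Rightarrow> bool" where
  "fund_system N \<longleftrightarrow> (\<forall>n. is_ideal (N n)) \<and> (\<forall>m n. \<exists>k. N k \<subseteq> N m \<inter> N n)"

definition open_ideals :: "(nat \<Rightarrow> 'a::comm_ring_1 set) \<Rightarrow> 'a set set" where
  "open_ideals N = {J. is_ideal J \<and> (\<exists>n. N n \<subseteq> J)}"

text \<open>Complete: the canonical map to the inverse limit of the discrete quotients A/J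
  (J open) is bijective; elements of the inverse limit are written via representatives.\<close>
definition complete_ring :: "(nat \<Rightarrow> 'a::comm_ring_1 set) \<Rightarrow> bool" where
  "complete_ring N \<longleftrightarrow> fund_system N \<and>
     \<Inter>(open_ideals N) = {0} \<and>
     (\<forall>x :: 'a set \<Rightarrow> 'a.
        (\<forall>J\<in>open_ideals N. \<forall>J'\<in>open_ideals N. J' \<subseteq> J \<longrightarrow> x J' - x J \<in> J) \<longrightarrow>
        (\<exists>y. \<forall>J\<in>open_ideals N. y - x J \<in> J))"

definition is_ring_hom :: "('a::comm_ring_1 \<Rightarrow> 'b::comm_ring_1) \<Rightarrow> bool" where
  "is_ring_hom f \<longleftrightarrow> f 1 = 1 \<and> (\<forall>x y. f (x + y) = f x + f y) \<and> (\<forall>x y. f (x * y) = f x * f y)"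

text \<open>Continuity for linear topologies (neighbourhoods of a are a + J, J open).\<close>
definition cont_map ::
  "(nat \<Rightarrow> 'a::comm_ring_1 set) \<Rightarrow> (nat \<Rightarrow> 'b::comm_ring_1 set) \<Rightarrow> ('a \<Rightarrow> 'b) \<Rightarrow> bool" where
  "cont_map NA NB f \<longleftrightarrow>
     (\<forall>a. \<forall>J\<in>open_ideals NB. \<exists>J'\<in>open_ideals NA. \<forall>x\<in>J'. f (a + x) - f a \<in> J)"

subsection \<open>Restricted power series B{T}, B{T,T'} (coefficient functions)\<close>

definition restricted :: "(nat \<Rightarrow> 'b::comm_ring_1 set) \<Rightarrow> ('i \<Rightarrow> 'b) \<Rightarrow> bool" where
  "restricted NB c \<longleftrightarrow> (\<forall>J\<in>open_ideals NB. finite {i. c i \<notin> J})"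

definition ser_const :: "'b::comm_ring_1 \<Rightarrow> nat \<Rightarrow> 'b" where
  "ser_const b = (\<lambda>i. if i = 0 then b else 0)"

definition ser_add :: "(nat \<Rightarrow> 'b::comm_ring_1) \<Rightarrow> (nat \<Rightarrow> 'b) \<Rightarrow> nat \<Rightarrow> 'b" where
  "ser_add c d = (\<lambda>i. c i + d i)"

definition ser_mult :: "(nat \<Rightarrow> 'b::comm_ring_1) \<Rightarrow> (nat \<Rightarrow> 'b) \<Rightarrow> nat \<Rightarrow> 'b" where
  "ser_mult c d = (\<lambda>i. \<Sum>j\<le>i. c j * d (i - j))"

text \<open>Continuity of a map B \<rightarrow> B{T}: B{T} has the open ideals
  {series with all coefficients in J}, J open in B.\<close>
definition cont_to_series ::
  "(nat \<Rightarrow> 'b::comm_ring_1 set) \<Rightarrow> ('b \<Rightarrow> nat \<Rightarrow> 'b) \<Rightarrow> bool" where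
  "cont_to_series NB f \<longleftrightarrow>
     (\<forall>b. \<forall>J\<in>open_ideals NB. \<exists>J'\<in>open_ideals NB. \<forall>x\<in>J'. \<forall>i. f (b + x) i - f b i \<in> J)"

text \<open>Comorphisms, via the anti-equivalence and
  G_a \<times> G_a \<times> Spf B = Spf B{T,T'} (index (i,j) = coefficient of T^i T'^j):
  (id \<times> \<mu>)^*  : B{T} \<rightarrow> B{T,T'},  sum f_i T^i \<mapsto> sum_i T^i \<mu>^*(f_i)(T');
  (m \<times> id)^*  : B{T} \<rightarrow> B{T,T'},  T \<mapsto> T + T';
  (\<epsilon> \<times> id)^* : B{T} \<rightarrow> B,       T \<mapsto> 0.\<close>

definition id_times_comor :: "('b::comm_ring_1 \<Rightarrow> nat \<Rightarrow> 'b) \<Rightarrow> (nat \<Rightarrow> 'b) \<Rightarrow> nat \<times> nat \<Rightarrow> 'b" where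
  "id_times_comor \<mu> c = (\<lambda>(i, j). \<mu> (c i) j)"

definition add_times_id :: "(nat \<Rightarrow> 'b::comm_ring_1) \<Rightarrow> nat \<times> nat \<Rightarrow> 'b" where
  "add_times_id c = (\<lambda>(i, j). of_nat ((i + j) choose i) * c (i + j))"

definition eps_times_id :: "(nat \<Rightarrow> 'b::comm_ring_1) \<Rightarrow> 'b" where
  "eps_times_id c = c 0"

text \<open>An action G_a \<times> Spf B \<rightarrow> Spf B, given by its comorphism \<mu> : B \<rightarrow> B{T}, a continuous
  homomorphism of A-algebras, satisfying the action axioms.\<close>
definition is_Ga_action ::
  "(nat \<Rightarrow> 'a::comm_ring_1 set) \<Rightarrow> (nat \<Rightarrow> 'b::comm_ring_1 set) \<Rightarrow> ('a \<Rightarrow> 'b)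
   \<Rightarrow> ('b \<Rightarrow> nat \<Rightarrow> 'b) \<Rightarrow> bool" where
  "is_Ga_action NA NB \<phi> \<mu> \<longleftrightarrow>
     (\<forall>b. restricted NB (\<mu> b)) \<and>
     \<mu> 1 = ser_const 1 \<and>
     (\<forall>b b'. \<mu> (b + b') = ser_add (\<mu> b) (\<mu> b')) \<and>
     (\<forall>b b'. \<mu> (b * b') = ser_mult (\<mu> b) (\<mu> b')) \<and>
     (\<forall>a. \<mu> (\<phi> a) = ser_const (\<phi> a)) \<and>
     cont_to_series NB \<mu> \<and>
     (\<forall>b. id_times_comor \<mu> (\<mu> b) = add_times_id (\<mu> b)) \<and>
     (\<forall>b. eps_times_id (\<mu> b) = b)"

definition iter_higher_deriv ::
  "(nat \<Rightarrow> 'b::comm_ring_1 set) \<Rightarrow> ('a::comm_ring_1 \<Rightarrow> 'b) \<Rightarrow> (nat \<Rightarrow> 'b \<Rightarrow> 'b) \<Rightarrow> bool" where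
  "iter_higher_deriv NB \<phi> D \<longleftrightarrow>
     (\<forall>i. (\<forall>b b'. D i (b + b') = D i b + D i b') \<and>
          (\<forall>a b. D i (\<phi> a * b) = \<phi> a * D i b) \<and>
          cont_map NB NB (D i)) \<and>
     D 0 = id \<and>
     (\<forall>i b b'. D i (b * b') = (\<Sum>j\<le>i. D j b * D (i - j) b')) \<and>
     (\<forall>i j. D i \<circ> D j = (\<lambda>b. of_nat ((i + j) choose i) * D (i + j) b))"

definition top_integrable :: "(nat \<Rightarrow> 'b::comm_ring_1 set) \<Rightarrow> (nat \<Rightarrow> 'b \<Rightarrow> 'b) \<Rightarrow> bool" where
  "top_integrable NB D \<longleftrightarrow>
     (\<forall>b. \<forall>J'\<in>open_ideals NB. \<exists>J\<in>open_ideals NB. \<exists>n0. \<forall>n\<ge>n0. \<forall>x\<in>J. D n (b + x) \<in> J')"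

end

theory Submission
  imports Defs
begin

text \<open>The correspondence is \<mu>*(b) = \<Sum>_i D^(i)(b) T^i: D^(i)(b) is the i-th coefficient of the
  coaction. Under this dictionary the comorphism being an A-algebra homomorphism is the Leibniz
  rule together with A-linearity, the counit axiom is D^(0) = id, and coassociativity, after
  expanding (T + T')^k binomially, is the iteration rule. What remains is topological:
  \<mu>*(b) lies in B{T} and \<mu>* is continuous into B{T} exactly when the D^(i) are continuous and
  converge continuously to 0. For large i the required uniformity comes from integrability, for
  the finitely many small i from continuity of each D^(i), and finite intersections of open
  ideals are open.\<close>

lemma is_ideal_zero: "is_ideal J \<Longrightarrow> 0 \<in> J"
  unfolding is_ideal_def by blast

lemma is_ideal_add: "is_ideal J \<Longrightarrow> x \<in> J \<Longrightarrow> y \<in> J \<Longrightarrow> x + y \<in> J"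
  unfolding is_ideal_def by blast

lemma is_ideal_Int: "is_ideal J \<Longrightarrow> is_ideal K \<Longrightarrow> is_ideal (J \<inter> K)"
  unfolding is_ideal_def by blast

lemma open_ideals_is_ideal: "J \<in> open_ideals N \<Longrightarrow> is_ideal J"
  unfolding open_ideals_def by blast

lemma open_ideals_Int:
  assumes "fund_system N" "J \<in> open_ideals N" "K \<in> open_ideals N"
  shows "J \<inter> K \<in> open_ideals N"
proof -
  obtain m n where "N m \<subseteq> J" "N n \<subseteq> K"
    using assms(2,3) unfolding open_ideals_def by blast
  moreover obtain k where "N k \<subseteq> N m \<inter> N n"
    using assms(1) unfolding fund_system_def by blast
  ultimately have "N k \<subseteq> J \<inter> K" by blast
  then show ?thesis
    using assms(2,3) is_ideal_Int unfolding open_ideals_def by blast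
qed

lemma open_ideals_Int_INT:
  assumes "fund_system N" "finite I" "J \<in> open_ideals N" "\<And>i. i \<in> I \<Longrightarrow> K i \<in> open_ideals N"
  shows "J \<inter> (\<Inter>i\<in>I. K i) \<in> open_ideals N"
  using assms(2,4)
proof (induction I rule: finite_induct)
  case empty
  then show ?case using assms(3) by simp
next
  case (insert i I)
  have "J \<inter> (\<Inter>i\<in>I. K i) \<in> open_ideals N" "K i \<in> open_ideals N"
    using insert by simp_all
  then have "(J \<inter> (\<Inter>i\<in>I. K i)) \<inter> K i \<in> open_ideals N"
    by (rule open_ideals_Int[OF assms(1)])
  moreover have "J \<inter> (\<Inter>i\<in>insert i I. K i) = (J \<inter> (\<Inter>i\<in>I. K i)) \<inter> K i" by blast
  ultimately show ?case by simp
qed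

lemma cont_map_additive:
  assumes "\<And>x y. f (x + y) = f x + f y"
  shows "cont_map NA NB f \<longleftrightarrow> (\<forall>J\<in>open_ideals NB. \<exists>J'\<in>open_ideals NA. \<forall>x\<in>J'. f x \<in> J)"
  unfolding cont_map_def assms by simp

lemma cont_map_coeff_if_cont_to_series:
  assumes "cont_to_series NB \<mu>"
  shows "cont_map NB NB (\<lambda>b. \<mu> b i)"
  unfolding cont_map_def
proof (intro allI ballI)
  fix b J assume "J \<in> open_ideals NB"
  then obtain J' where "J' \<in> open_ideals NB" "\<forall>x\<in>J'. \<forall>i. \<mu> (b + x) i - \<mu> b i \<in> J"
    using assms unfolding cont_to_series_def by blast
  then show "\<exists>J'\<in>open_ideals NB. \<forall>x\<in>J'. \<mu> (b + x) i - \<mu> b i \<in> J" by blast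
qed

lemma restricted_if_top_integrable:
  assumes "top_integrable NB D"
  shows "restricted NB (\<lambda>i. D i b)"
  unfolding restricted_def
proof
  fix J assume "J \<in> open_ideals NB"
  then obtain J0 n0 where J0: "J0 \<in> open_ideals NB" "\<forall>n\<ge>n0. \<forall>x\<in>J0. D n (b + x) \<in> J"
    using assms unfolding top_integrable_def by blast
  then have "\<forall>n\<ge>n0. D n (b + 0) \<in> J"
    using is_ideal_zero[OF open_ideals_is_ideal[OF J0(1)]] by blast
  then have "{i. D i b \<notin> J} \<subseteq> {..<n0}" by (auto simp: not_less[symmetric])
  then show "finite {i. D i b \<notin> J}" by (rule finite_subset) simp
qed

lemma top_integrable_if_restricted:
  assumes "\<And>b. restricted NB (\<mu> b)" and "cont_to_series NB \<mu>"
  shows "top_integrable NB (\<lambda>i b. \<mu> b i)"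
  unfolding top_integrable_def
proof (intro allI ballI)
  fix b J' assume J': "J' \<in> open_ideals NB"
  then obtain k where "\<forall>n\<in>{i. \<mu> b i \<notin> J'}. n < k"
    using assms(1) unfolding restricted_def finite_nat_set_iff_bounded by blast
  then have k: "\<And>n. k \<le> n \<Longrightarrow> \<mu> b n \<in> J'" by (meson mem_Collect_eq not_le)
  obtain J where J: "J \<in> open_ideals NB" "\<forall>x\<in>J. \<forall>i. \<mu> (b + x) i - \<mu> b i \<in> J'"
    using assms(2) J' unfolding cont_to_series_def by blast
  have "\<mu> (b + x) n \<in> J'" if "k \<le> n" "x \<in> J" for n x
  proof -
    have "(\<mu> (b + x) n - \<mu> b n) + \<mu> b n \<in> J'"
      using is_ideal_add[OF open_ideals_is_ideal[OF J']] J(2) \<open>x \<in> J\<close> k[OF \<open>k \<le> n\<close>]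
      by blast
    then show ?thesis by simp
  qed
  then show "\<exists>J\<in>open_ideals NB. \<exists>n0. \<forall>n\<ge>n0. \<forall>x\<in>J. \<mu> (b + x) n \<in> J'"
    using J(1) by (intro bexI[of _ J] exI[of _ k]) auto
qed

lemma cont_to_series_if_top_integrable:
  assumes "fund_system NB" and add: "\<And>i b b'. D i (b + b') = D i b + D i b'"
    and cont: "\<And>i. cont_map NB NB (D i)" and "top_integrable NB D"
  shows "cont_to_series NB (\<lambda>b i. D i b)"
  unfolding cont_to_series_def
proof (intro allI ballI)
  fix b J assume J: "J \<in> open_ideals NB"
  obtain J0 n0 where J0: "J0 \<in> open_ideals NB" "\<forall>n\<ge>n0. \<forall>x\<in>J0. D n (0 + x) \<in> J"
    using \<open>top_integrable NB D\<close> J unfolding top_integrable_def by blast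
  have "cont_map NB NB (D i) \<longleftrightarrow> (\<forall>J\<in>open_ideals NB. \<exists>K\<in>open_ideals NB. \<forall>x\<in>K. D i x \<in> J)" for i
    by (rule cont_map_additive) (rule add)
  then have "\<forall>i. \<exists>K\<in>open_ideals NB. \<forall>x\<in>K. D i x \<in> J"
    using cont J by blast
  then obtain K where K: "\<And>i. K i \<in> open_ideals NB" "\<And>i. \<forall>x\<in>K i. D i x \<in> J"
    by metis
  define J' where "J' = J0 \<inter> (\<Inter>i<n0. K i)"
  have "J' \<in> open_ideals NB"
    unfolding J'_def using assms(1) J0(1) K(1) by (intro open_ideals_Int_INT) auto
  moreover have "D i x \<in> J" if "x \<in> J'" for i x
    using that J0(2) K(2) unfolding J'_def by (cases "i < n0") auto
  ultimately show "\<exists>J'\<in>open_ideals NB. \<forall>x\<in>J'. \<forall>i. D i (b + x) - D i b \<in> J"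
    by (intro bexI[of _ J']) (simp_all add: add)
qed

lemma higher_deriv_one:
  fixes D :: "nat \<Rightarrow> 'b::comm_ring_1 \<Rightarrow> 'b"
  assumes leibniz: "\<And>i b b'. D i (b * b') = (\<Sum>j\<le>i. D j b * D (i - j) b')" and "D 0 = id"
  shows "D i 1 = ser_const 1 i"
proof (induction i rule: less_induct)
  case (less i)
  show ?case
  proof (cases "i = 0")
    case True
    then show ?thesis using \<open>D 0 = id\<close> by (simp add: ser_const_def)
  next
    case False
    have "D i 1 = (\<Sum>j\<le>i. D j 1 * D (i - j) 1)" using leibniz[of i 1 1] by simp
    also have "\<dots> = (\<Sum>j\<in>{0, i}. D j 1 * D (i - j) 1)"
      by (rule sum.mono_neutral_right) (use less False in \<open>auto simp: ser_const_def\<close>)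
    also have "\<dots> = D i 1 + D i 1" using False \<open>D 0 = id\<close> by simp
    finally show ?thesis using False by (simp add: ser_const_def)
  qed
qed

lemma ser_mult_ser_const_left: "ser_mult (ser_const c) d i = c * d i"
proof -
  have "ser_mult (ser_const c) d i = (\<Sum>j\<in>{0}. ser_const c j * d (i - j))"
    unfolding ser_mult_def by (rule sum.mono_neutral_right) (auto simp: ser_const_def)
  then show ?thesis by (simp add: ser_const_def)
qed

lemma binomial_add_symmetric: "(i + j) choose i = (i + j) choose (j::nat)"
  using binomial_symmetric[of i "i + j"] by simp

lemma add_times_id_swap: "add_times_id c (j, i) = of_nat ((i + j) choose i) * c (i + j)"
  unfolding add_times_id_def by (simp add: add.commute[of j i] binomial_add_symmetric[of i j])

lemma coassociative_iff_iterative: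
  "(\<forall>b. id_times_comor \<mu> (\<mu> b) = add_times_id (\<mu> b)) \<longleftrightarrow>
   (\<forall>i j. (\<lambda>b. \<mu> b i) \<circ> (\<lambda>b. \<mu> b j) = (\<lambda>b. of_nat ((i + j) choose i) * \<mu> b (i + j)))"
proof -
  have "id_times_comor \<mu> (\<mu> b) = add_times_id (\<mu> b) \<longleftrightarrow>
      (\<forall>i j. \<mu> (\<mu> b j) i = add_times_id (\<mu> b) (j, i))" for b
    unfolding id_times_comor_def fun_eq_iff by auto
  then show ?thesis by (auto simp: add_times_id_swap fun_eq_iff)
qed

lemma iter_higher_deriv_if_Ga_action:
  assumes "is_Ga_action NA NB \<phi> \<mu>"
  shows "iter_higher_deriv NB \<phi> (\<lambda>i b. \<mu> b i)" and "top_integrable NB (\<lambda>i b. \<mu> b i)"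
proof -
  from assms have restr: "\<And>b. restricted NB (\<mu> b)"
    and add: "\<And>b b'. \<mu> (b + b') = ser_add (\<mu> b) (\<mu> b')"
    and mult: "\<And>b b'. \<mu> (b * b') = ser_mult (\<mu> b) (\<mu> b')"
    and const: "\<And>a. \<mu> (\<phi> a) = ser_const (\<phi> a)"
    and cont: "cont_to_series NB \<mu>"
    and coassoc: "\<forall>b. id_times_comor \<mu> (\<mu> b) = add_times_id (\<mu> b)"
    and counit: "\<And>b. eps_times_id (\<mu> b) = b"
    unfolding is_Ga_action_def by blast+
  show "iter_higher_deriv NB \<phi> (\<lambda>i b. \<mu> b i)"
    unfolding iter_higher_deriv_def
  proof (intro conjI allI)
    show "\<mu> (b + b') i = \<mu> b i + \<mu> b' i" for i b b' by (simp add: add ser_add_def)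
    show "\<mu> (\<phi> a * b) i = \<phi> a * \<mu> b i" for i a b by (simp add: mult const ser_mult_ser_const_left)
    show "cont_map NB NB (\<lambda>b. \<mu> b i)" for i using cont by (rule cont_map_coeff_if_cont_to_series)
    show "(\<lambda>b. \<mu> b 0) = id" using counit by (simp add: eps_times_id_def fun_eq_iff)
    show "\<mu> (b * b') i = (\<Sum>j\<le>i. \<mu> b j * \<mu> b' (i - j))" for i b b' by (simp add: mult ser_mult_def)
    show "(\<lambda>b. \<mu> b i) \<circ> (\<lambda>b. \<mu> b j) = (\<lambda>b. of_nat ((i + j) choose i) * \<mu> b (i + j))" for i j
      using coassoc coassociative_iff_iterative by blast
  qed
  show "top_integrable NB (\<lambda>i b. \<mu> b i)" using restr cont by (rule top_integrable_if_restricted)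
qed

lemma Ga_action_if_iter_higher_deriv:
  assumes "fund_system NB" "iter_higher_deriv NB \<phi> D" "top_integrable NB D"
  shows "is_Ga_action NA NB \<phi> (\<lambda>b i. D i b)"
proof -
  from assms(2) have add: "\<And>i b b'. D i (b + b') = D i b + D i b'"
    and lin: "\<And>i a b. D i (\<phi> a * b) = \<phi> a * D i b"
    and cont: "\<And>i. cont_map NB NB (D i)"
    and D0: "D 0 = id"
    and leibniz: "\<And>i b b'. D i (b * b') = (\<Sum>j\<le>i. D j b * D (i - j) b')"
    and iter: "\<forall>i j. D i \<circ> D j = (\<lambda>b. of_nat ((i + j) choose i) * D (i + j) b)"
    unfolding iter_higher_deriv_def by blast+
  have one: "D i 1 = ser_const 1 i" for i using leibniz D0 by (rule higher_deriv_one)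
  have "D i (\<phi> a) = ser_const (\<phi> a) i" for a i
    using lin[of i a 1] one by (simp add: ser_const_def)
  then show ?thesis
    unfolding is_Ga_action_def
    using restricted_if_top_integrable[OF assms(3)]
      cont_to_series_if_top_integrable[OF assms(1) add cont assms(3)]
      coassociative_iff_iterative[of "\<lambda>b i. D i b"] iter one D0 add leibniz
    by (auto simp: ser_add_def ser_mult_def eps_times_id_def fun_eq_iff)
qed

theorem theorem3p6:
  fixes NA :: "nat \<Rightarrow> 'a::comm_ring_1 set" and NB :: "nat \<Rightarrow> 'b::comm_ring_1 set"
    and \<phi> :: "'a \<Rightarrow> 'b"
  assumes "complete_ring NA" and "complete_ring NB"
    and "is_ring_hom \<phi>" and "cont_map NA NB \<phi>"
  shows "bij_betw (\<lambda>\<mu> i b. \<mu> b i)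
           {\<mu>. is_Ga_action NA NB \<phi> \<mu>}
           {D. iter_higher_deriv NB \<phi> D \<and> top_integrable NB D}"
proof (rule bij_betw_byWitness[where f' = "\<lambda>D b i. D i b"])
  have "fund_system NB" using assms(2) unfolding complete_ring_def by blast
  then show "(\<lambda>D b i. D i b) ` {D. iter_higher_deriv NB \<phi> D \<and> top_integrable NB D}
      \<subseteq> {\<mu>. is_Ga_action NA NB \<phi> \<mu>}"
    using Ga_action_if_iter_higher_deriv by blast
  show "(\<lambda>\<mu> i b. \<mu> b i) ` {\<mu>. is_Ga_action NA NB \<phi> \<mu>}
      \<subseteq> {D. iter_higher_deriv NB \<phi> D \<and> top_integrable NB D}"
    using iter_higher_deriv_if_Ga_action by blast
qed auto

end
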